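(* Let $V=\{x_1,\dots,x_n\}$ be a list of $n$ real numbers in the interval $[L,U]$ and let $k$ be an integer with $k<n$. Then a $k$-minimal variance subset of $V$ can be computed in $\mathcal{O}(n^2)$ time.
   Context: For a finite (multi)set $Q$ of reals with $|Q|=k$, $\mathrm{Var}[Q]=\frac{1}{k}\sum_{q\in Q}(q-\mu_Q)^2$ with $\mu_Q=\frac1k\sum_{q\in Q}q$. Given $V$ listed in ascending order and an integer $k<n$, a subset $Q\subset V$ (a choice of $k$ of the $n$ entries) is a $k$-minimal variance subset of $V$ if $|Q|=k$ and $\mathrm{Var}[Q']\ge\mathrm{Var}[Q]$ for every $Q'\subset V$ with $|Q'|=k$. *)

theory Defs
  imports Complex_Main "HOL-Library.Multiset" "HOL-Library.Time_Functions"
begin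

text \<open>A sub(multi)set of the entries of V is modelled as a sub-multiset of mset V.\<close>

definition Var :: "real multiset \<Rightarrow> real" where
  "Var Q = (let k = real (size Q); \<mu> = sum_mset Q / k
            in sum_mset (image_mset (\<lambda>q. (q - \<mu>)\<^sup>2) Q) / k)"

definition k_minimal_variance_subset :: "real list \<Rightarrow> nat \<Rightarrow> real multiset \<Rightarrow> bool" where
  "k_minimal_variance_subset V k Q \<longleftrightarrow>
     Q \<subseteq># mset V \<and> size Q = k \<and>
     (\<forall>Q'. Q' \<subseteq># mset V \<and> size Q' = k \<longrightarrow> Var Q \<le> Var Q')"

fun takeL :: "nat \<Rightarrow> real list \<Rightarrow> real list" where
  "takeL 0 xs = []"
| "takeL (Suc n) [] = []"
| "takeL (Suc n) (x # xs) = x # takeL n xs"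

fun lenL :: "real list \<Rightarrow> nat" where
  "lenL [] = 0"
| "lenL (x # xs) = Suc (lenL xs)"

fun lenR :: "real list \<Rightarrow> real" where
  "lenR [] = 0"
| "lenR (x # xs) = 1 + lenR xs"

fun sumL :: "real list \<Rightarrow> real" where
  "sumL [] = 0"
| "sumL (x # xs) = x + sumL xs"

fun sqdevL :: "real \<Rightarrow> real list \<Rightarrow> real" where
  "sqdevL m [] = 0"
| "sqdevL m (x # xs) = (x - m) * (x - m) + sqdevL m xs"

fun varL :: "real list \<Rightarrow> real" where
  "varL xs = (let l = lenR xs; m = sumL xs / l in sqdevL m xs / l)"

fun bestW :: "nat \<Rightarrow> nat \<Rightarrow> real list \<Rightarrow> real list" where
  "bestW k 0 xs = takeL k xs"
| "bestW k (Suc m) [] = []"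
| "bestW k (Suc m) (x # xs) =
     (let w = takeL k (x # xs); b = bestW k m xs in if varL w \<le> varL b then w else b)"

fun mvs :: "nat \<Rightarrow> real list \<Rightarrow> real list" where
  "mvs k V = bestW k (lenL V - k) V"

text \<open>Running-time functions, written in the style generated by the time_fun
  command of HOL-Library.Time_Functions (each function call costs 1 plus the cost of
  the calls it makes; primitive operations on numbers are free).\<close>

fun T_takeL :: "nat \<Rightarrow> real list \<Rightarrow> nat" where
  "T_takeL 0 xs = 1"
| "T_takeL (Suc n) [] = 1"
| "T_takeL (Suc n) (x # xs) = T_takeL n xs + 1"

fun T_lenL :: "real list \<Rightarrow> nat" where
  "T_lenL [] = 1"
| "T_lenL (x # xs) = T_lenL xs + 1"

fun T_lenR :: "real list \<Rightarrow> nat" where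
  "T_lenR [] = 1"
| "T_lenR (x # xs) = T_lenR xs + 1"

fun T_sumL :: "real list \<Rightarrow> nat" where
  "T_sumL [] = 1"
| "T_sumL (x # xs) = T_sumL xs + 1"

fun T_sqdevL :: "real \<Rightarrow> real list \<Rightarrow> nat" where
  "T_sqdevL m [] = 1"
| "T_sqdevL m (x # xs) = T_sqdevL m xs + 1"

fun T_varL :: "real list \<Rightarrow> nat" where
  "T_varL xs = (let l = lenR xs; m = sumL xs / l
                in T_lenR xs + T_sumL xs + T_sqdevL m xs + 1)"

fun T_bestW :: "nat \<Rightarrow> nat \<Rightarrow> real list \<Rightarrow> nat" where
  "T_bestW k 0 xs = T_takeL k xs + 1"
| "T_bestW k (Suc m) [] = 1"
| "T_bestW k (Suc m) (x # xs) =
     (let w = takeL k (x # xs); b = bestW k m xs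
      in T_takeL k (x # xs) + T_bestW k m xs + T_varL w + T_varL b + 1)"

fun T_mvs :: "nat \<Rightarrow> real list \<Rightarrow> nat" where
  "T_mvs k V = T_lenL V + T_bestW k (lenL V - k) V + 1"

end

theory Submission
  imports Defs
begin

text \<open>Fix a centre c. Among the k-element sub-multisets of a sorted list V, the sum of squared
  distances to c is minimised by a contiguous window of V: if Q contains both end entries of V
  and misses an entry y, then y lies between the ends, so it is no farther from c than one of
  them, and exchanging that end for y does not increase the sum; the new multiset avoids an end,
  and induction on the length of V applies. Choosing c as the mean of an arbitrary k-subset Q
  and using that the variance is the least mean squared deviation from any point, some window
  has variance at most Var Q. Hence scanning the n - k + 1 windows, each evaluated in O(k)
  steps, finds a k-minimal variance subset in O(n^2) steps.\<close>

lemma exists_add_mset_subseteq: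
  assumes "Q \<subseteq># M" "size Q < size M"
  shows "\<exists>y. add_mset y Q \<subseteq># M"
proof -
  have "M - Q \<noteq> {#}"
    using assms size_Diff_submset[OF assms(1)] by auto
  then obtain y where "y \<in># M - Q"
    by (meson multiset_nonemptyE)
  then have "add_mset y Q \<subseteq># M"
    using assms(1)
    by (metis add_mset_add_single mset_subset_eq_single subset_mset.add_diff_inverse
        subset_mset.add_left_mono)
  then show ?thesis ..
qed

lemma exchange_sub_mset:
  fixes g :: "'a \<Rightarrow> 'b::ordered_comm_monoid_add"
  assumes "a \<in># Q" "add_mset y Q \<subseteq># add_mset a M" "g y \<le> g a"
  shows "add_mset y (Q - {#a#}) \<subseteq># M"
    and "size (add_mset y (Q - {#a#})) = size Q"
    and "(\<Sum>x\<in>#add_mset y (Q - {#a#}). g x) \<le> (\<Sum>x\<in>#Q. g x)"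
proof -
  have Q: "Q = add_mset a (Q - {#a#})"
    using assms(1) by simp
  have "add_mset a (add_mset y (Q - {#a#})) = add_mset y Q"
    by (subst (2) Q) simp
  then show "add_mset y (Q - {#a#}) \<subseteq># M"
    using assms(2) by (metis mset_subset_eq_add_mset_cancel)
  show "size (add_mset y (Q - {#a#})) = size Q"
    by (subst (2) Q) simp
  show "(\<Sum>x\<in>#add_mset y (Q - {#a#}). g x) \<le> (\<Sum>x\<in>#Q. g x)"
    using assms(3) by (subst (2) Q) (simp add: add_right_mono)
qed

lemma mset_take_drop_subseteq: "mset (take k (drop i xs)) \<subseteq># mset xs"
proof -
  have "mset (take k (drop i xs)) \<subseteq># mset (drop i xs)"
    by (metis append_take_drop_id mset_append mset_subset_eq_add_left)
  also have "mset (drop i xs) \<subseteq># mset xs"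
    by (metis append_take_drop_id mset_append mset_subset_eq_add_right)
  finally show ?thesis .
qed

lemma sorted_hd_le_le_last:
  assumes "sorted xs" "y \<in> set xs"
  shows "hd xs \<le> y" "y \<le> last xs"
  using assms by (induction xs) (auto simp: sorted_append)

lemma sub_mset_avoiding_an_end:
  fixes g :: "'a::linorder \<Rightarrow> 'b::ordered_comm_monoid_add"
  assumes quasiconvex: "\<And>a y b. a \<le> y \<Longrightarrow> y \<le> b \<Longrightarrow> g y \<le> g a \<or> g y \<le> g b"
    and "sorted V" "Q \<subseteq># mset V" "size Q < length V"
  obtains Q' where "size Q' = size Q" "(\<Sum>x\<in>#Q'. g x) \<le> (\<Sum>x\<in>#Q. g x)"
    "Q' \<subseteq># mset (tl V) \<or> Q' \<subseteq># mset (butlast V)"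
proof -
  have "V \<noteq> []"
    using assms(4) by auto
  have V_tl: "mset V = add_mset (hd V) (mset (tl V))"
    using \<open>V \<noteq> []\<close> by (cases V) auto
  have V_butlast: "mset V = add_mset (last V) (mset (butlast V))"
    using \<open>V \<noteq> []\<close> by (cases V rule: rev_cases) auto
  consider "hd V \<notin># Q" | "last V \<notin># Q" | "hd V \<in># Q" "last V \<in># Q" by blast
  then show thesis
  proof cases
    case 1
    have "Q \<subseteq># mset (tl V)"
      using 1 assms(3) unfolding V_tl by (simp add: inter_add_left1 subset_mset.inf.absorb_iff2)
    then show thesis
      by (intro that[of Q]) simp_all
  next
    case 2
    have "Q \<subseteq># mset (butlast V)"
      using 2 assms(3) unfolding V_butlast
      by (simp add: inter_add_left1 subset_mset.inf.absorb_iff2)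
    then show thesis
      by (intro that[of Q]) simp_all
  next
    case 3
    obtain y where y: "add_mset y Q \<subseteq># mset V"
      using exists_add_mset_subseteq[OF assms(3)] assms(4) by auto
    then have "y \<in> set V"
      by (metis insert_subset_eq_iff set_mset_mset)
    then have "hd V \<le> y" "y \<le> last V"
      using sorted_hd_le_le_last assms(2) by auto
    then consider "g y \<le> g (hd V)" | "g y \<le> g (last V)"
      using quasiconvex by blast
    then show thesis
    proof cases
      case 1
      have "add_mset y Q \<subseteq># add_mset (hd V) (mset (tl V))"
        using y V_tl by simp
      from exchange_sub_mset[OF 3(1) this 1] show thesis
        using that by blast
    next
      case 2
      have "add_mset y Q \<subseteq># add_mset (last V) (mset (butlast V))"
        using y V_butlast by simp
      from exchange_sub_mset[OF 3(2) this 2] show thesis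
        using that by blast
    qed
  qed
qed

lemma exists_window_le_sub_mset:
  fixes g :: "'a::linorder \<Rightarrow> 'b::ordered_comm_monoid_add"
  assumes quasiconvex: "\<And>a y b. a \<le> y \<Longrightarrow> y \<le> b \<Longrightarrow> g y \<le> g a \<or> g y \<le> g b"
  shows "sorted V \<Longrightarrow> Q \<subseteq># mset V \<Longrightarrow>
    \<exists>i \<le> length V - size Q. (\<Sum>x\<in>#mset (take (size Q) (drop i V)). g x) \<le> (\<Sum>x\<in>#Q. g x)"
proof (induction "length V" arbitrary: V Q rule: less_induct)
  case less
  show ?case
  proof (cases "size Q < length V")
    case False
    then have "Q = mset V"
      using less.prems(2) mset_subset_size subset_mset.le_less by fastforce
    then show ?thesis
      by (intro exI[of _ 0]) simp
  next
    case True
    obtain Q' where Q': "size Q' = size Q" "(\<Sum>x\<in>#Q'. g x) \<le> (\<Sum>x\<in>#Q. g x)"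
      "Q' \<subseteq># mset (tl V) \<or> Q' \<subseteq># mset (butlast V)"
      using sub_mset_avoiding_an_end[where g = g, OF quasiconvex less.prems True] by blast
    have shorter: "length (tl V) < length V" "length (butlast V) < length V"
      using True by auto
    consider "Q' \<subseteq># mset (tl V)" | "Q' \<subseteq># mset (butlast V)"
      using Q'(3) by blast
    then show ?thesis
    proof cases
      case 1
      obtain i where "i \<le> length (tl V) - size Q'"
        "(\<Sum>x\<in>#mset (take (size Q') (drop i (tl V))). g x) \<le> (\<Sum>x\<in>#Q'. g x)"
        using less.hyps[OF shorter(1) sorted_tl[OF less.prems(1)] 1] by blast
      moreover have "size Q' \<le> length (tl V)"
        using size_mset_mono[OF 1] by simp
      ultimately show ?thesis
        using Q'(1,2) True by (intro exI[of _ "Suc i"]) (auto simp: drop_Suc intro: order_trans)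
    next
      case 2
      obtain i where "i \<le> length (butlast V) - size Q'"
        "(\<Sum>x\<in>#mset (take (size Q') (drop i (butlast V))). g x) \<le> (\<Sum>x\<in>#Q'. g x)"
        using less.hyps[OF shorter(2) sorted_butlast[OF less.prems(1)] 2] by blast
      moreover have "size Q' \<le> length (butlast V)"
        using size_mset_mono[OF 2] by simp
      ultimately show ?thesis
        using Q'(1,2)
        by (intro exI[of _ i]) (auto simp: butlast_conv_take drop_take intro: order_trans)
    qed
  qed
qed

lemma Var_le_mean_sq_dev:
  "Var Q \<le> (\<Sum>x\<in>#Q. (x - c)\<^sup>2) / size Q"
proof (cases "Q = {#}")
  case True
  then show ?thesis by (simp add: Var_def)
next
  case False
  define n where "n = real (size Q)"
  define \<mu> where "\<mu> = sum_mset Q / n"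
  have "n > 0"
    using False by (simp add: n_def nonempty_has_size)
  have sum_Q: "sum_mset Q = n * \<mu>"
    using \<open>n > 0\<close> by (simp add: \<mu>_def)
  have "(\<Sum>x\<in>#Q. (x - c)\<^sup>2)
      = (\<Sum>x\<in>#Q. (x - \<mu>)\<^sup>2 + 2 * (\<mu> - c) * x + ((\<mu> - c)\<^sup>2 - 2 * (\<mu> - c) * \<mu>))"
    by (rule arg_cong[where f = sum_mset], rule image_mset_cong)
      (simp add: power2_eq_square algebra_simps)
  also have "\<dots> = (\<Sum>x\<in>#Q. (x - \<mu>)\<^sup>2) + 2 * (\<mu> - c) * (\<Sum>x\<in>#Q. x)
      + n * ((\<mu> - c)\<^sup>2 - 2 * (\<mu> - c) * \<mu>)"
    by (simp only: sum_mset.distrib sum_mset_distrib_left sum_mset_constant n_def)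
  also have "\<dots> = (\<Sum>x\<in>#Q. (x - \<mu>)\<^sup>2) + n * (\<mu> - c)\<^sup>2"
    by (simp add: sum_Q power2_eq_square algebra_simps)
  finally have "(\<Sum>x\<in>#Q. (x - \<mu>)\<^sup>2) \<le> (\<Sum>x\<in>#Q. (x - c)\<^sup>2)"
    using \<open>n > 0\<close> by simp
  then show ?thesis
    using \<open>n > 0\<close> by (simp add: Var_def Let_def n_def \<mu>_def divide_right_mono)
qed

lemma power2_diff_le_at_an_end:
  fixes a y b c :: real
  assumes "a \<le> y" "y \<le> b"
  shows "(y - c)\<^sup>2 \<le> (a - c)\<^sup>2 \<or> (y - c)\<^sup>2 \<le> (b - c)\<^sup>2"
proof (cases "y \<le> c")
  case True
  then have "\<bar>y - c\<bar> \<le> \<bar>a - c\<bar>" using assms by linarith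
  then show ?thesis by (simp add: abs_le_square_iff)
next
  case False
  then have "\<bar>y - c\<bar> \<le> \<bar>b - c\<bar>" using assms by linarith
  then show ?thesis by (simp add: abs_le_square_iff)
qed

lemma exists_window_Var_le:
  assumes "sorted V" "Q \<subseteq># mset V"
  shows "\<exists>i \<le> length V - size Q. Var (mset (take (size Q) (drop i V))) \<le> Var Q"
proof -
  define \<mu> where "\<mu> = sum_mset Q / size Q"
  obtain i where i: "i \<le> length V - size Q"
    and sq_dev_le: "(\<Sum>x\<in>#mset (take (size Q) (drop i V)). (x - \<mu>)\<^sup>2)
      \<le> (\<Sum>x\<in>#Q. (x - \<mu>)\<^sup>2)"
    using exists_window_le_sub_mset[where g = "\<lambda>x. (x - \<mu>)\<^sup>2", OF power2_diff_le_at_an_end assms]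
    by blast
  have "size Q \<le> length V"
    using size_mset_mono[OF assms(2)] by simp
  with i have size_window: "size (mset (take (size Q) (drop i V))) = size Q"
    by simp
  have "Var (mset (take (size Q) (drop i V)))
      \<le> (\<Sum>x\<in>#mset (take (size Q) (drop i V)). (x - \<mu>)\<^sup>2) / size Q"
    using Var_le_mean_sq_dev[of "mset (take (size Q) (drop i V))" \<mu>] unfolding size_window .
  also have "\<dots> \<le> (\<Sum>x\<in>#Q. (x - \<mu>)\<^sup>2) / size Q"
    using sq_dev_le by (simp add: divide_right_mono)
  also have "\<dots> = Var Q"
    by (simp add: Var_def Let_def \<mu>_def)
  finally show ?thesis
    using i by blast
qed

lemma takeL_eq_take [simp]: "takeL n xs = take n xs"
  by (induction n xs rule: takeL.induct) auto

lemma lenL_eq_length [simp]: "lenL xs = length xs"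
  by (induction xs) auto

lemma lenR_eq_length [simp]: "lenR xs = real (length xs)"
  by (induction xs) auto

lemma sumL_eq_sum_list [simp]: "sumL xs = sum_list xs"
  by (induction xs) auto

lemma sqdevL_eq_sum_list [simp]: "sqdevL m xs = (\<Sum>x\<leftarrow>xs. (x - m)\<^sup>2)"
  by (induction xs) (auto simp: power2_eq_square)

lemma varL_eq_Var: "varL xs = Var (mset xs)"
  by (simp add: Var_def Let_def sum_mset_sum_list flip: mset_map)

lemma bestW_is_window: "\<exists>i \<le> m. bestW k m xs = take k (drop i xs)"
proof (induction k m xs rule: bestW.induct)
  case (3 k m x xs)
  then obtain i where "i \<le> m" "bestW k m xs = take k (drop i xs)"
    by blast
  then show ?case
    by (auto simp: Let_def simp del: varL.simps intro: exI[of _ 0] exI[of _ "Suc i"])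
qed auto

lemma varL_bestW_le:
  "i \<le> m \<Longrightarrow> varL (bestW k m xs) \<le> varL (take k (drop i xs))"
proof (induction k m xs arbitrary: i rule: bestW.induct)
  case (3 k m x xs)
  show ?case
  proof (cases i)
    case 0
    then show ?thesis
      by (simp add: Let_def del: varL.simps)
  next
    case (Suc j)
    then have "varL (bestW k m xs) \<le> varL (take k (drop j xs))"
      using 3 by simp
    then show ?thesis
      by (simp add: Let_def Suc del: varL.simps)
  qed
qed auto

lemma k_minimal_variance_subset_mvs:
  assumes "sorted V" "k \<le> length V"
  shows "k_minimal_variance_subset V k (mset (mvs k V))"
  unfolding k_minimal_variance_subset_def
proof (intro conjI allI impI)
  define m where "m = length V - k"
  have mvs_eq: "mvs k V = bestW k m V"
    by (simp add: m_def del: bestW.simps)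
  obtain i where "i \<le> m" "mvs k V = take k (drop i V)"
    using bestW_is_window mvs_eq by metis
  then show "mset (mvs k V) \<subseteq># mset V" "size (mset (mvs k V)) = k"
    using mset_take_drop_subseteq assms(2) by (auto simp: m_def)
  fix Q
  assume "Q \<subseteq># mset V \<and> size Q = k"
  then obtain j where "j \<le> m" and window_le: "Var (mset (take k (drop j V))) \<le> Var Q"
    using exists_window_Var_le[OF assms(1)] by (auto simp: m_def)
  have "Var (mset (mvs k V)) = varL (bestW k m V)"
    by (simp only: mvs_eq varL_eq_Var)
  also have "\<dots> \<le> varL (take k (drop j V))"
    using \<open>j \<le> m\<close> by (rule varL_bestW_le)
  also have "\<dots> \<le> Var Q"
    using window_le by (simp only: varL_eq_Var)
  finally show "Var (mset (mvs k V)) \<le> Var Q" .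
qed

lemma T_takeL_le: "T_takeL n xs \<le> n + 1"
  by (induction n xs rule: T_takeL.induct) auto

lemma T_lenL_eq [simp]: "T_lenL xs = length xs + 1"
  by (induction xs) auto

lemma T_lenR_eq [simp]: "T_lenR xs = length xs + 1"
  by (induction xs) auto

lemma T_sumL_eq [simp]: "T_sumL xs = length xs + 1"
  by (induction xs) auto

lemma T_sqdevL_eq [simp]: "T_sqdevL m xs = length xs + 1"
  by (induction xs) auto

lemma T_varL_eq: "T_varL xs = 3 * length xs + 4"
  by (simp add: Let_def)

lemma length_bestW_le: "length (bestW k m xs) \<le> k"
  by (induction k m xs rule: bestW.induct) (auto simp: Let_def simp del: varL.simps)

lemma T_bestW_le: "T_bestW k m xs \<le> (m + 1) * (7 * k + 10)"
proof (induction k m xs rule: bestW.induct)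
  case (1 k xs)
  then show ?case
    using T_takeL_le[of k xs] by simp
next
  case (3 k m x xs)
  have "T_takeL k (x # xs) \<le> k + 1"
    by (rule T_takeL_le)
  moreover have "T_varL (take k (x # xs)) \<le> 3 * k + 4" "T_varL (bestW k m xs) \<le> 3 * k + 4"
    using length_bestW_le[of k m xs] by (simp_all only: T_varL_eq) simp_all
  ultimately show ?case
    using "3.IH" by (simp add: Let_def del: T_varL.simps)
qed simp

lemma T_mvs_le:
  assumes "k \<le> length V" "V \<noteq> []"
  shows "T_mvs k V \<le> 40 * length V ^ 2"
proof -
  define n where "n = length V"
  have "n \<ge> 1"
    using assms(2) by (simp add: n_def Suc_le_eq)
  have "T_mvs k V \<le> n + 2 + (n - k + 1) * (7 * k + 10)"
    using T_bestW_le[of k "n - k" V] by (simp add: n_def del: T_bestW.simps)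
  also have "(n - k + 1) * (7 * k + 10) \<le> (n + 1) * (7 * n + 10)"
    using assms(1) by (intro mult_mono) (auto simp: n_def)
  also have "n + 2 + (n + 1) * (7 * n + 10) \<le> 40 * n ^ 2"
  proof -
    have "n \<le> n * n" "1 \<le> n * n"
      using \<open>n \<ge> 1\<close> by (simp_all add: Suc_le_eq)
    have "n + 2 + (n + 1) * (7 * n + 10) = 7 * (n * n) + 18 * n + 12"
      by (simp add: algebra_simps)
    also have "\<dots> \<le> 40 * (n * n)"
      using \<open>n \<le> n * n\<close> \<open>1 \<le> n * n\<close> by linarith
    finally show ?thesis
      by (simp add: power2_eq_square)
  qed
  finally show ?thesis
    by (simp add: n_def)
qed

theorem mainTheorem4:
  "\<exists>c::real. \<forall>(V::real list) (k::nat) (L::real) (U::real).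
      sorted V \<and> set V \<subseteq> {L..U} \<and> k < length V \<longrightarrow>
        k_minimal_variance_subset V k (mset (mvs k V)) \<and>
        real (T_mvs k V) \<le> c * real (length V) ^ 2"
proof (intro exI[of _ 40] allI impI conjI)
  fix V :: "real list" and k :: nat and L U :: real
  assume "sorted V \<and> set V \<subseteq> {L..U} \<and> k < length V"
  then have "sorted V" "k \<le> length V" "V \<noteq> []"
    by auto
  then show "k_minimal_variance_subset V k (mset (mvs k V))"
    using k_minimal_variance_subset_mvs by blast
  have "real (T_mvs k V) \<le> real (40 * length V ^ 2)"
    using T_mvs_le \<open>k \<le> length V\<close> \<open>V \<noteq> []\<close> by (simp only: of_nat_le_iff)
  then show "real (T_mvs k V) \<le> 40 * real (length V) ^ 2"
    by simp
qed

end
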